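(* Let $d\ge1$ and $p>1$, and let $q>1$ satisfy $p^{-1}+q^{-1}=1$. Let $A\subset\mathbb{Z}^d$ be a finite set generating $\mathbb{Z}^d$ as a group, and let $\pi$ be a probability measure on $\mathbb{Z}^d$ with $\pi(x)>0$ for $x\in A$, $\pi(x)=0$ for $x\notin A$, and $\pi(-x)=\pi(x)$ for all $x$. Let $Q\ge0$ on $\mathbb{Z}^d$ with $\lim_{|x|\to\infty}Q(x)=0$. For a probability measure $\nu$ on $A$ set $\phi_\nu(x)=\nu(x)^{1/q}\pi(x)^{1/p}$ for $x\in A$ and $\phi_\nu(x)=0$ for $x\in\mathbb{Z}^d\setminus A$. Let $\mathcal{M}(A)$ denote the set of probability measures on $A$. Then, with the convention $x_0=0$, $$\limsup_{n\to\infty}\frac1n\log\sup_{\nu\in\mathcal{M}(A)}\sum_{x_1,\dots,x_n\in\mathbb{Z}^d}\prod_{k=1}^n\phi_\nu(x_k-x_{k-1})Q(x_k)\le\frac1p\log\tilde\rho,$$ where $$\tilde\rho=\sup_{|f|_2=1}\sum_{x\in\mathbb{Z}^d}\pi(x)\Big[\sum_{y\in\mathbb{Z}^d}\sqrt{Q(x+y)}\sqrt{Q(y)}f(x+y)f(y)\Big]^p,$$ the supremum over real-valued $f$ on $\mathbb{Z}^d$ with $\sum_x f^2(x)=1$. *)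

theory Defs
  imports "HOL-Analysis.Analysis"
begin

text \<open>Points of the lattice Z^d are modelled as int ^ 'd for a finite index type 'd
  (so d = CARD('d) \<ge> 1 is arbitrary).\<close>

inductive_set gen_subgroup :: "(int ^ 'd) set \<Rightarrow> (int ^ 'd) set" for A where
  gen_zero: "0 \<in> gen_subgroup A"
| gen_base: "a \<in> A \<Longrightarrow> a \<in> gen_subgroup A"
| gen_add: "x \<in> gen_subgroup A \<Longrightarrow> y \<in> gen_subgroup A \<Longrightarrow> x + y \<in> gen_subgroup A"
| gen_neg: "x \<in> gen_subgroup A \<Longrightarrow> - x \<in> gen_subgroup A"

definition eln :: "real \<Rightarrow> ereal" where
  "eln x = (if x \<le> 0 then - \<infinity> else ereal (ln x))"

definition prob_measures_on :: "(int ^ 'd) set \<Rightarrow> (int ^ 'd \<Rightarrow> real) set" where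
  "prob_measures_on A = {\<nu>. (\<forall>x\<in>A. \<nu> x \<ge> 0) \<and> (\<forall>x. x \<notin> A \<longrightarrow> \<nu> x = 0) \<and> sum \<nu> A = 1}"

definition phi :: "real \<Rightarrow> real \<Rightarrow> (int ^ 'd) set \<Rightarrow> (int ^ 'd \<Rightarrow> real) \<Rightarrow> (int ^ 'd \<Rightarrow> real)
                   \<Rightarrow> int ^ 'd \<Rightarrow> real" where
  "phi p q A \<pi> \<nu> x = (if x \<in> A then \<nu> x powr (1/q) * \<pi> x powr (1/p) else 0)"

text \<open>Paths x_0 = 0, x_1, ..., x_n in Z^d, encoded as functions nat => Z^d that are
  0 at index 0 and beyond n (in bijection with (Z^d)^n).\<close>
definition paths :: "nat \<Rightarrow> (nat \<Rightarrow> int ^ 'd) set" where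
  "paths n = {xs. xs 0 = 0 \<and> (\<forall>k>n. xs k = 0)}"

definition path_sum :: "real \<Rightarrow> real \<Rightarrow> (int ^ 'd) set \<Rightarrow> (int ^ 'd \<Rightarrow> real) \<Rightarrow> (int ^ 'd \<Rightarrow> real)
                   \<Rightarrow> (int ^ 'd \<Rightarrow> real) \<Rightarrow> nat \<Rightarrow> real" where
  "path_sum p q A \<pi> Q \<nu> n =
     infsum (\<lambda>xs. \<Prod>k\<in>{1..n}. phi p q A \<pi> \<nu> (xs k - xs (k - 1)) * Q (xs k)) (paths n)"

definition rho_tilde :: "real \<Rightarrow> (int ^ 'd \<Rightarrow> real) \<Rightarrow> (int ^ 'd \<Rightarrow> real) \<Rightarrow> real" where
  "rho_tilde p \<pi> Q = Sup {infsum (\<lambda>x. \<pi> x *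
        \<bar>infsum (\<lambda>y. sqrt (Q (x + y)) * sqrt (Q y) * f (x + y) * f y) UNIV\<bar> powr p) UNIV
      | f :: int ^ 'd \<Rightarrow> real. ((\<lambda>x. (f x)\<^sup>2) has_sum 1) UNIV}"

end

theory Submission
  imports Defs "HOL-Real_Asymp.Real_Asymp"
begin

text \<open>
  Let \<open>W\<^sub>n(y)\<close> be the total weight of the paths of length \<open>n\<close> from \<open>0\<close> to \<open>y\<close>, so that the
  path sum is \<open>\<Sum>\<^sub>y W\<^sub>n(y)\<close>. The symmetrised weights \<open>w\<^sub>n = W\<^sub>n / \<surd>Q\<close> satisfy
  \<open>w\<^sub>n\<^sub>+\<^sub>1 = T w\<^sub>n\<close>, where \<open>(T v)(y) = \<surd>Q(y) \<Sum>\<^sub>a \<phi>\<^sub>\<nu>(a) \<surd>Q(y - a) v(y - a)\<close>. For \<open>h \<ge> 0\<close>,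
  \<open>\<langle>h, T h\<rangle> = \<Sum>\<^sub>a \<nu>(a)\<^bsup>1/q\<^esup> \<pi>(a)\<^bsup>1/p\<^esup> c(a)\<close> with \<open>c\<close> the autocorrelation of \<open>h \<surd>Q\<close>; Hoelder's
  inequality eliminates \<open>\<nu>\<close>, and the definition of \<open>\<rho> = rho_tilde\<close> gives \<open>\<langle>h, T h\<rangle> \<le> \<rho>\<^bsup>1/p\<^esup> \<parallel>h\<parallel>\<^sup>2\<close>
  uniformly in \<open>\<nu>\<close>. Although \<open>T\<close> need not be symmetric, this bound on its quadratic form
  suffices: for \<open>t > \<rho>\<^bsup>1/p\<^esup>\<close>, testing it on \<open>h = \<Sum>\<^sub>k\<^sub>\<le>\<^sub>N t\<^sup>-\<^sup>k w\<^sub>k\<close> gives \<open>\<parallel>w\<^sub>N\<parallel> \<le> C t\<^sup>N\<close>.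
  The endpoints of paths of length \<open>N\<close> form a set of size polynomial in \<open>N\<close>, so by
  Cauchy-Schwarz the path sum is at most \<open>C poly(N) t\<^sup>N\<close>.
\<close>

lemma infsum_eq_sum_of_support:
  fixes g :: "'a \<Rightarrow> 'b::{comm_monoid_add, t2_space}"
  assumes "finite U" and "\<And>y. y \<notin> U \<Longrightarrow> g y = 0"
  shows "infsum g UNIV = sum g U"
proof -
  have "infsum g UNIV = infsum g U"
    by (rule infsum_cong_neutral) (use assms(2) in auto)
  then show ?thesis
    using assms(1) by simp
qed

lemma infsum_translate:
  fixes g :: "'a::group_add \<Rightarrow> 'b::{comm_monoid_add, t2_space}"
  shows "infsum (\<lambda>y. g (a + y)) UNIV = infsum g UNIV"
proof -
  have "bij_betw (\<lambda>y. a + y) UNIV UNIV"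
    by (rule bij_betwI[where g = "\<lambda>y. - a + y"]) (auto simp: add.assoc[symmetric])
  then show ?thesis
    by (rule infsum_reindex_bij_betw)
qed

lemma sum_translate_of_support:
  fixes g :: "'a::group_add \<Rightarrow> 'b::{comm_monoid_add, t2_space}"
  assumes "finite U" "finite V"
    and "\<And>y. y \<notin> U \<Longrightarrow> g y = 0" and "\<And>y. y \<notin> V \<Longrightarrow> g (a + y) = 0"
  shows "sum g U = (\<Sum>y\<in>V. g (a + y))"
  using infsum_eq_sum_of_support[OF assms(1,3)] infsum_eq_sum_of_support[OF assms(2,4)]
    infsum_translate[of g a] by simp

lemma has_sum_sq_normalize:
  fixes h :: "'a \<Rightarrow> real"
  assumes "finite U" and "\<And>y. y \<notin> U \<Longrightarrow> h y = 0" and "(\<Sum>y\<in>U. (h y)\<^sup>2) = H" and "H > 0"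
  shows "((\<lambda>y. (h y / sqrt H)\<^sup>2) has_sum 1) UNIV"
proof -
  have "(\<Sum>y\<in>U. (h y / sqrt H)\<^sup>2) = 1"
    using assms(3,4) by (simp add: power_divide sum_divide_distrib[symmetric])
  then have "((\<lambda>y. (h y / sqrt H)\<^sup>2) has_sum 1) U"
    using has_sum_finite[OF assms(1)] by metis
  then show ?thesis
    by (rule has_sum_cong_neutral[THEN iffD1, rotated -1]) (use assms(2) in auto)
qed

lemma holder_inequality_prob_weight:
  fixes \<nu> \<pi> c :: "'a \<Rightarrow> real"
  assumes pq: "p > 1" "q > 1" "1/p + 1/q = 1" and "finite A"
    and \<nu>: "\<And>a. a \<in> A \<Longrightarrow> \<nu> a \<ge> 0" "sum \<nu> A = 1"
    and \<pi>: "\<And>a. a \<in> A \<Longrightarrow> \<pi> a \<ge> 0" and c: "\<And>a. a \<in> A \<Longrightarrow> c a \<ge> 0"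
  shows "(\<Sum>a\<in>A. \<nu> a powr (1/q) * \<pi> a powr (1/p) * c a) \<le> (\<Sum>a\<in>A. \<pi> a * c a powr p) powr (1/p)"
proof -
  define B where "B = (\<Sum>a\<in>A. \<pi> a * c a powr p)"
  have "B \<ge> 0"
    unfolding B_def using \<pi> by (intro sum_nonneg) simp
  show ?thesis
  proof (cases "B = 0")
    case True
    then have "\<pi> a * c a powr p = 0" if "a \<in> A" for a
      using that \<open>finite A\<close> \<pi> unfolding B_def by (subst (asm) sum_nonneg_eq_0_iff) auto
    then have "(\<Sum>a\<in>A. \<nu> a powr (1/q) * \<pi> a powr (1/p) * c a) = 0"
      by (intro sum.neutral) fastforce
    then show ?thesis
      by simp
  next
    case False
    with \<open>B \<ge> 0\<close> have "B > 0" by simp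
    define \<beta> where "\<beta> = B powr (1/p)"
    have "\<beta> > 0"
      unfolding \<beta>_def using \<open>B > 0\<close> by simp
    have Young: "\<nu> a powr (1/q) * \<pi> a powr (1/p) * c a \<le> \<beta> * (\<nu> a / q + \<pi> a * c a powr p / B / p)"
      if a: "a \<in> A" for a
    proof -
      have "(\<nu> a powr (1/q)) powr q = \<nu> a"
        using \<nu>(1)[OF a] pq by (simp add: powr_powr)
      moreover have "(\<pi> a powr (1/p) * c a / \<beta>) powr p = \<pi> a * c a powr p / B"
        using \<pi>[OF a] c[OF a] pq \<open>\<beta> > 0\<close> \<open>B > 0\<close> unfolding \<beta>_def
        by (simp add: powr_divide powr_mult powr_powr)
      ultimately have "\<nu> a powr (1/q) * (\<pi> a powr (1/p) * c a / \<beta>)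
          \<le> \<nu> a / q + \<pi> a * c a powr p / B / p"
        using Youngs_inequality[of q p "\<nu> a powr (1/q)" "\<pi> a powr (1/p) * c a / \<beta>"]
          pq \<pi>[OF a] c[OF a] \<open>\<beta> > 0\<close> by (simp add: add.commute)
      with \<open>\<beta> > 0\<close> show ?thesis
        by (simp add: field_simps)
    qed
    have "(\<Sum>a\<in>A. \<nu> a powr (1/q) * \<pi> a powr (1/p) * c a)
        \<le> (\<Sum>a\<in>A. \<beta> * (\<nu> a / q + \<pi> a * c a powr p / B / p))"
      by (rule sum_mono) (rule Young)
    also have "\<dots> = \<beta> * (sum \<nu> A / q + (\<Sum>a\<in>A. \<pi> a * c a powr p) / B / p)"
      by (simp only: sum_distrib_left[symmetric] sum.distrib sum_divide_distrib)
    also have "\<dots> = \<beta>"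
      using \<nu>(2) \<open>B > 0\<close> pq by (simp add: B_def[symmetric])
    finally show ?thesis
      unfolding \<beta>_def B_def .
  qed
qed

section \<open>The variational quantity \<open>rho_tilde\<close>\<close>

definition autocorr :: "('a::ab_group_add \<Rightarrow> real) \<Rightarrow> ('a \<Rightarrow> real) \<Rightarrow> 'a \<Rightarrow> real" where
  "autocorr Q f x = infsum (\<lambda>y. sqrt (Q (x + y)) * sqrt (Q y) * f (x + y) * f y) UNIV"

definition rho_value :: "real \<Rightarrow> ('a::ab_group_add \<Rightarrow> real) \<Rightarrow> ('a \<Rightarrow> real) \<Rightarrow> ('a \<Rightarrow> real) \<Rightarrow> real" where
  "rho_value p \<pi> Q f = infsum (\<lambda>x. \<pi> x * \<bar>autocorr Q f x\<bar> powr p) UNIV"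

lemma rho_tilde_eq_Sup_rho_value:
  "rho_tilde p \<pi> Q = Sup {rho_value p \<pi> Q f | f. ((\<lambda>x. (f x)\<^sup>2) has_sum 1) UNIV}"
  unfolding rho_tilde_def rho_value_def autocorr_def ..

lemma autocorr_eq_sum:
  assumes "finite U" and "\<And>y. y \<notin> U \<Longrightarrow> h y = 0"
  shows "autocorr Q h x = (\<Sum>y\<in>U. sqrt (Q (x + y)) * sqrt (Q y) * h (x + y) * h y)"
  unfolding autocorr_def by (rule infsum_eq_sum_of_support) (use assms in auto)

lemma autocorr_scale: "autocorr Q (\<lambda>y. c * f y) x = c\<^sup>2 * autocorr Q f x"
  unfolding autocorr_def power2_eq_square
  by (subst infsum_cmult_right'[symmetric]) (simp add: algebra_simps)

lemma abs_autocorr_le: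
  assumes Q: "\<And>x. 0 \<le> Q x" "\<And>x. Q x \<le> M" and f: "((\<lambda>x. (f x)\<^sup>2) has_sum 1) UNIV"
  shows "\<bar>autocorr Q f x\<bar> \<le> M"
proof -
  define g where "g y = sqrt (Q (x + y)) * sqrt (Q y) * f (x + y) * f y" for y
  define G where "G y = M/2 * ((f (x + y))\<^sup>2 + (f y)\<^sup>2)" for y
  have "M \<ge> 0"
    using order_trans[OF Q(1) Q(2)] .
  have shifted: "((\<lambda>y. (f (x + y))\<^sup>2) has_sum 1) UNIV"
    using has_sum_reindex_bij_betw[of "\<lambda>y. x + y" UNIV UNIV "\<lambda>y. (f y)\<^sup>2" 1] f
    by (simp add: bij_betw_def inj_def surj_def)
  have G: "(G has_sum M) UNIV"
    using has_sum_cmult_right[OF has_sum_add[OF shifted f], of "M/2"] unfolding G_def by simp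
  have g_le_G: "norm (g y) \<le> G y" for y
  proof -
    have "sqrt (Q (x + y)) * sqrt (Q y) \<le> sqrt (M * M)"
      unfolding real_sqrt_mult[symmetric] using Q \<open>M \<ge> 0\<close> by (intro real_sqrt_le_mono mult_mono) auto
    then have "sqrt (Q (x + y)) * sqrt (Q y) \<le> M"
      using \<open>M \<ge> 0\<close> by simp
    moreover have "\<bar>f (x + y) * f y\<bar> \<le> ((f (x + y))\<^sup>2 + (f y)\<^sup>2) / 2"
      using sum_squares_bound[of "\<bar>f (x + y)\<bar>" "\<bar>f y\<bar>"] by (simp add: abs_mult)
    ultimately have "(sqrt (Q (x + y)) * sqrt (Q y)) * \<bar>f (x + y) * f y\<bar>
        \<le> M * (((f (x + y))\<^sup>2 + (f y)\<^sup>2) / 2)"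
      using \<open>M \<ge> 0\<close> by (intro mult_mono) auto
    then show ?thesis
      unfolding g_def G_def using Q(1) by (simp add: abs_mult)
  qed
  have "\<bar>infsum g UNIV\<bar> \<le> M"
  proof (cases "g summable_on UNIV")
    case True
    show ?thesis
      using norm_infsum_le[OF has_sum_infsum[OF True] G] g_le_G by simp
  next
    case False
    then show ?thesis
      using \<open>M \<ge> 0\<close> by (simp add: infsum_not_exists)
  qed
  then show ?thesis
    unfolding autocorr_def g_def .
qed

lemma rho_value_bounds:
  assumes Q: "\<And>x. 0 \<le> Q x" "\<And>x. Q x \<le> M" and f: "((\<lambda>x. (f x)\<^sup>2) has_sum 1) UNIV"
    and "finite A" and \<pi>: "\<And>x. \<pi> x \<ge> 0" "\<And>x. x \<notin> A \<Longrightarrow> \<pi> x = 0" and "p > 0"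
  shows "0 \<le> rho_value p \<pi> Q f" and "rho_value p \<pi> Q f \<le> sum \<pi> A * M powr p"
proof -
  have eq: "rho_value p \<pi> Q f = (\<Sum>x\<in>A. \<pi> x * \<bar>autocorr Q f x\<bar> powr p)"
    unfolding rho_value_def by (rule infsum_eq_sum_of_support) (use assms in auto)
  then show "0 \<le> rho_value p \<pi> Q f"
    using \<pi> by (simp add: sum_nonneg)
  have "\<pi> x * \<bar>autocorr Q f x\<bar> powr p \<le> \<pi> x * M powr p" for x
    using abs_autocorr_le[OF Q f] \<pi>(1) \<open>p > 0\<close> by (intro mult_left_mono powr_mono2) auto
  then show "rho_value p \<pi> Q f \<le> sum \<pi> A * M powr p"
    unfolding eq sum_distrib_right by (rule sum_mono)
qed

lemma
  fixes \<pi> Q :: "int ^ 'd \<Rightarrow> real"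
  assumes Q: "\<And>x. 0 \<le> Q x" "\<And>x. Q x \<le> M"
    and "finite A" and \<pi>_nonneg: "\<And>x. \<pi> x \<ge> 0" and \<pi>_zero: "\<And>x. x \<notin> A \<Longrightarrow> \<pi> x = 0"
    and "p > 0"
  shows rho_value_le_rho_tilde:
      "((\<lambda>x. (f x)\<^sup>2) has_sum 1) UNIV \<Longrightarrow> rho_value p \<pi> Q f \<le> rho_tilde p \<pi> Q"
    and rho_tilde_nonneg: "0 \<le> rho_tilde p \<pi> Q"
proof -
  note bounds = rho_value_bounds[of Q M _ A \<pi> p, OF Q _ \<open>finite A\<close> \<pi>_nonneg \<pi>_zero \<open>p > 0\<close>]
  have bdd: "bdd_above {rho_value p \<pi> Q f | f. ((\<lambda>x. (f x)\<^sup>2) has_sum 1) UNIV}"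
    using bounds(2) by (auto intro!: bdd_aboveI)
  show le: "rho_value p \<pi> Q f \<le> rho_tilde p \<pi> Q" if "((\<lambda>x. (f x)\<^sup>2) has_sum 1) UNIV" for f
    unfolding rho_tilde_eq_Sup_rho_value by (rule cSup_upper[OF _ bdd]) (use that in blast)
  have unit: "((\<lambda>x. (indicator {0} x :: real)\<^sup>2) has_sum 1) UNIV"
    by (rule has_sum_finite_neutralI[where B = "{0}"]) (auto simp: indicator_def)
  show "0 \<le> rho_tilde p \<pi> Q"
    using le[OF unit] bounds(1)[OF unit] by linarith
qed

section \<open>The symmetrised transfer operator\<close>

definition sym_transfer :: "('a::ab_group_add \<Rightarrow> real) \<Rightarrow> 'a set \<Rightarrow> ('a \<Rightarrow> real) \<Rightarrow> ('a \<Rightarrow> real) \<Rightarrow> 'a \<Rightarrow> real"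
  where "sym_transfer Q A \<phi> v y = (\<Sum>a\<in>A. \<phi> a * sqrt (Q (y - a)) * v (y - a)) * sqrt (Q y)"

lemma sym_transfer_lincomb:
  "sym_transfer Q A \<phi> (\<lambda>y. \<Sum>k\<in>K. c k * f k y) y = (\<Sum>k\<in>K. c k * sym_transfer Q A \<phi> (f k) y)"
  unfolding sym_transfer_def
  by (simp add: sum_distrib_left sum_distrib_right sum.swap[of _ A] algebra_simps)

lemma sum_mult_sym_transfer:
  fixes h :: "'a::ab_group_add \<Rightarrow> real"
  assumes "finite U" and h: "\<And>y. y \<notin> U \<Longrightarrow> h y = 0"
  shows "(\<Sum>y\<in>U. h y * sym_transfer Q A \<phi> h y) = (\<Sum>a\<in>A. \<phi> a * autocorr Q h a)"
proof -
  have shift: "(\<Sum>y\<in>U. h y * h (y - a) * sqrt (Q (y - a)) * sqrt (Q y)) = autocorr Q h a" for a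
  proof -
    have "autocorr Q h a = (\<Sum>y\<in>U. sqrt (Q (a + y)) * sqrt (Q y) * h (a + y) * h y)"
      by (rule autocorr_eq_sum) (use assms in auto)
    then show ?thesis
      by (subst sum_translate_of_support[OF \<open>finite U\<close> \<open>finite U\<close>, where a = a])
         (auto simp: h algebra_simps)
  qed
  have "(\<Sum>y\<in>U. h y * sym_transfer Q A \<phi> h y)
      = (\<Sum>a\<in>A. \<phi> a * (\<Sum>y\<in>U. h y * h (y - a) * sqrt (Q (y - a)) * sqrt (Q y)))"
    unfolding sym_transfer_def
    by (simp add: sum_distrib_left sum_distrib_right sum.swap[of _ A] algebra_simps)
  then show ?thesis
    unfolding shift .
qed

lemma autocorr_nonneg:
  assumes "finite U" and "\<And>y. y \<notin> U \<Longrightarrow> h y = 0" and "\<And>y. h y \<ge> 0" and "\<And>y. Q y \<ge> 0"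
  shows "autocorr Q h x \<ge> 0"
proof -
  have "autocorr Q h x = (\<Sum>y\<in>U. sqrt (Q (x + y)) * sqrt (Q y) * h (x + y) * h y)"
    by (rule autocorr_eq_sum) (use assms in auto)
  then show ?thesis
    using assms(3,4) by (simp add: sum_nonneg)
qed

text \<open>The variational definition of \<open>rho_tilde\<close>, tested on the normalised function \<open>h / \<parallel>h\<parallel>\<^sub>2\<close>.\<close>
lemma sum_autocorr_powr_le_rho_tilde:
  fixes \<pi> Q h :: "int ^ 'd \<Rightarrow> real"
  assumes Q: "\<And>x. 0 \<le> Q x" "\<And>x. Q x \<le> M"
    and "finite A" and \<pi>_nonneg: "\<And>x. \<pi> x \<ge> 0" and \<pi>_zero: "\<And>x. x \<notin> A \<Longrightarrow> \<pi> x = 0" and "p > 0"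
    and "finite U" and h_zero: "\<And>y. y \<notin> U \<Longrightarrow> h y = 0" and h_nonneg: "\<And>y. h y \<ge> 0"
  shows "(\<Sum>a\<in>A. \<pi> a * autocorr Q h a powr p) \<le> rho_tilde p \<pi> Q * (\<Sum>y\<in>U. (h y)\<^sup>2) powr p"
proof -
  define H where "H = (\<Sum>y\<in>U. (h y)\<^sup>2)"
  have "H \<ge> 0"
    unfolding H_def by (simp add: sum_nonneg)
  show ?thesis
  proof (cases "H = 0")
    case True
    then have "h y = 0" for y
      using \<open>finite U\<close> h_zero unfolding H_def by (cases "y \<in> U") (auto simp: sum_nonneg_eq_0_iff)
    then show ?thesis
      using \<open>p > 0\<close> by (simp add: autocorr_def H_def[symmetric] True)
  next
    case False
    with \<open>H \<ge> 0\<close> have "H > 0" by simp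
    define f where "f y = h y / sqrt H" for y
    have unit: "((\<lambda>y. (f y)\<^sup>2) has_sum 1) UNIV"
      unfolding f_def
      using has_sum_sq_normalize[where h = h, OF \<open>finite U\<close> h_zero H_def[symmetric] \<open>H > 0\<close>] .
    have "autocorr Q f a = autocorr Q h a / H" for a
      using autocorr_scale[of Q "1 / sqrt H" h a] \<open>H > 0\<close> unfolding f_def
      by (simp add: power_divide)
    then have "rho_value p \<pi> Q f = (\<Sum>a\<in>A. \<pi> a * (autocorr Q h a / H) powr p)"
      unfolding rho_value_def
      using autocorr_nonneg[where h = h, OF \<open>finite U\<close> h_zero h_nonneg Q(1)] \<open>H > 0\<close>
      by (subst infsum_eq_sum_of_support[OF \<open>finite A\<close>]) (auto simp: \<pi>_zero)
    also have "\<dots> = (\<Sum>a\<in>A. \<pi> a * autocorr Q h a powr p) / H powr p"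
      using autocorr_nonneg[where h = h, OF \<open>finite U\<close> h_zero h_nonneg Q(1)] \<open>H > 0\<close>
      by (simp add: powr_divide sum_divide_distrib)
    finally have "(\<Sum>a\<in>A. \<pi> a * autocorr Q h a powr p) / H powr p \<le> rho_tilde p \<pi> Q"
      using rho_value_le_rho_tilde[where \<pi> = \<pi> and Q = Q, OF Q \<open>finite A\<close> \<pi>_nonneg \<pi>_zero \<open>p > 0\<close> unit]
      by simp
    then show ?thesis
      using \<open>H > 0\<close> unfolding H_def[symmetric] by (simp add: divide_le_eq)
  qed
qed

lemma quadratic_form_sym_transfer_le:
  fixes \<pi> \<nu> Q h :: "int ^ 'd \<Rightarrow> real"
  assumes pq: "p > 1" "q > 1" "1/p + 1/q = 1" and "finite A"
    and \<pi>_nonneg: "\<And>x. \<pi> x \<ge> 0" and \<pi>_zero: "\<And>x. x \<notin> A \<Longrightarrow> \<pi> x = 0"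
    and \<nu>: "\<nu> \<in> prob_measures_on A"
    and Q: "\<And>x. 0 \<le> Q x" "\<And>x. Q x \<le> M"
    and "finite U" and h_zero: "\<And>y. y \<notin> U \<Longrightarrow> h y = 0" and h_nonneg: "\<And>y. h y \<ge> 0"
  shows "(\<Sum>y\<in>U. h y * sym_transfer Q A (phi p q A \<pi> \<nu>) h y)
           \<le> rho_tilde p \<pi> Q powr (1/p) * (\<Sum>y\<in>U. (h y)\<^sup>2)"
proof -
  define \<rho> where "\<rho> = rho_tilde p \<pi> Q"
  define H where "H = (\<Sum>y\<in>U. (h y)\<^sup>2)"
  have "p > 0" using pq by simp
  have "\<rho> \<ge> 0"
    unfolding \<rho>_def
    using rho_tilde_nonneg[where \<pi> = \<pi> and Q = Q, OF Q \<open>finite A\<close> \<pi>_nonneg \<pi>_zero \<open>p > 0\<close>] .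
  have "H \<ge> 0"
    unfolding H_def by (simp add: sum_nonneg)
  have \<nu>_prob: "\<And>a. a \<in> A \<Longrightarrow> \<nu> a \<ge> 0" "sum \<nu> A = 1"
    using \<nu> unfolding prob_measures_on_def by auto
  note c_nonneg = autocorr_nonneg[where h = h, OF \<open>finite U\<close> h_zero h_nonneg Q(1)]
  have "(\<Sum>y\<in>U. h y * sym_transfer Q A (phi p q A \<pi> \<nu>) h y)
      = (\<Sum>a\<in>A. \<nu> a powr (1/q) * \<pi> a powr (1/p) * autocorr Q h a)"
    using sum_mult_sym_transfer[where h = h and Q = Q and A = A] \<open>finite U\<close> h_zero
    by (simp add: phi_def)
  also have "\<dots> \<le> (\<Sum>a\<in>A. \<pi> a * autocorr Q h a powr p) powr (1/p)"
    by (rule holder_inequality_prob_weight[OF pq \<open>finite A\<close> \<nu>_prob \<pi>_nonneg c_nonneg])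
  also have "\<dots> \<le> (\<rho> * H powr p) powr (1/p)"
    unfolding \<rho>_def H_def
    using sum_autocorr_powr_le_rho_tilde[where \<pi> = \<pi> and Q = Q and h = h,
        OF Q \<open>finite A\<close> \<pi>_nonneg \<pi>_zero \<open>p > 0\<close> \<open>finite U\<close> h_zero h_nonneg]
      \<pi>_nonneg \<open>p > 0\<close> by (intro powr_mono2) (auto intro: sum_nonneg)
  also have "\<dots> = \<rho> powr (1/p) * H"
    using \<open>\<rho> \<ge> 0\<close> \<open>H \<ge> 0\<close> \<open>p > 0\<close> by (simp add: powr_mult powr_powr)
  finally show ?thesis
    unfolding \<rho>_def H_def .
qed

lemma sum_sq_le_of_coercive:
  fixes h g :: "'a \<Rightarrow> real"
  assumes "c > 0" and coercive: "c * (\<Sum>y\<in>U. (h y)\<^sup>2) \<le> (\<Sum>y\<in>U. h y * g y)"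
  shows "(\<Sum>y\<in>U. (h y)\<^sup>2) \<le> (\<Sum>y\<in>U. (g y)\<^sup>2) / c\<^sup>2"
proof -
  define X Y Z where "X = (\<Sum>y\<in>U. (h y)\<^sup>2)" and "Y = (\<Sum>y\<in>U. h y * g y)" and "Z = (\<Sum>y\<in>U. (g y)\<^sup>2)"
  have "X \<ge> 0"
    unfolding X_def by (simp add: sum_nonneg)
  have "(c * X)\<^sup>2 \<le> Y\<^sup>2"
    using coercive \<open>c > 0\<close> \<open>X \<ge> 0\<close> unfolding X_def Y_def by (intro power_mono) auto
  also have "\<dots> \<le> X * Z"
    unfolding X_def Y_def Z_def by (rule Cauchy_Schwarz_ineq_sum)
  finally have "c\<^sup>2 * X * X \<le> Z * X"
    by (simp add: power2_eq_square algebra_simps)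
  then have "c\<^sup>2 * X \<le> Z"
    using \<open>X \<ge> 0\<close> by (cases "X = 0") (auto simp: sum_nonneg Z_def)
  then show ?thesis
    using \<open>c > 0\<close> unfolding X_def[symmetric] Z_def[symmetric] by (simp add: field_simps)
qed

lemma sum_Suc_div_power:
  fixes w :: "nat \<Rightarrow> real"
  assumes "t \<noteq> 0"
  shows "(\<Sum>k=1..N. w (Suc k) / t^k) = t * (\<Sum>k=1..N. w k / t^k) - w 1 + w (Suc N) / t^N"
proof (induction N)
  case (Suc N)
  have "t * (w (Suc N) / t ^ Suc N) = w (Suc N) / t^N"
    using assms by (simp add: field_simps)
  with Suc show ?case
    by (simp add: algebra_simps)
qed simp

text \<open>The resolvent-type combination \<open>h = \<Sum>\<^sub>k w\<^sub>k / t\<^sup>k\<close> of an orbit \<open>w\<^sub>k\<^sub>+\<^sub>1 = T w\<^sub>k\<close>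
  satisfies \<open>T h = t h - w\<^sub>1 + w\<^sub>N\<^sub>+\<^sub>1 / t\<^sup>N\<close>, so a bound \<open>\<theta> < t\<close> on the quadratic form of \<open>T\<close>
  turns into a bound on \<open>h\<close> and hence on \<open>w\<^sub>N \<le> t\<^sup>N h\<close>.\<close>
lemma orbit_growth_bound:
  fixes w :: "nat \<Rightarrow> 'a \<Rightarrow> real"
  assumes "finite U" and "0 \<le> \<theta>" and "\<theta> < t" and "1 \<le> N" and w_nonneg: "\<And>k y. 0 \<le> w k y"
    and quadratic: "(\<Sum>y\<in>U. (\<Sum>k=1..N. w k y / t^k) * (\<Sum>k=1..N. w (Suc k) y / t^k))
                      \<le> \<theta> * (\<Sum>y\<in>U. (\<Sum>k=1..N. w k y / t^k)\<^sup>2)"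
  shows "(\<Sum>y\<in>U. (w N y)\<^sup>2) \<le> (t^N / (t - \<theta>))\<^sup>2 * (\<Sum>y\<in>U. (w 1 y)\<^sup>2)"
proof -
  define h where "h y = (\<Sum>k=1..N. w k y / t^k)" for y
  have "t > 0" and "t \<noteq> 0"
    using assms by linarith+
  have h_nonneg: "h y \<ge> 0" for y
    unfolding h_def using w_nonneg \<open>t > 0\<close> by (auto intro!: sum_nonneg)
  have "t * (\<Sum>y\<in>U. (h y)\<^sup>2) - (\<Sum>y\<in>U. h y * w 1 y) = (\<Sum>y\<in>U. h y * (t * h y - w 1 y))"
    by (simp add: algebra_simps sum_subtractf sum_distrib_left power2_eq_square)
  also have "\<dots> \<le> (\<Sum>y\<in>U. h y * (t * h y - w 1 y + w (Suc N) y / t^N))"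
    using h_nonneg w_nonneg \<open>t > 0\<close> by (intro sum_mono) (simp add: algebra_simps)
  also have "\<dots> \<le> \<theta> * (\<Sum>y\<in>U. (h y)\<^sup>2)"
  proof -
    have "(\<Sum>k=1..N. w (Suc k) y / t^k) = t * h y - w 1 y + w (Suc N) y / t^N" for y
      unfolding h_def using sum_Suc_div_power[OF \<open>t \<noteq> 0\<close>, of "\<lambda>k. w k y"] by simp
    then show ?thesis
      using quadratic unfolding h_def[symmetric] by simp
  qed
  finally have "(t - \<theta>) * (\<Sum>y\<in>U. (h y)\<^sup>2) \<le> (\<Sum>y\<in>U. h y * w 1 y)"
    by (simp add: algebra_simps)
  with \<open>\<theta> < t\<close> have h_bound: "(\<Sum>y\<in>U. (h y)\<^sup>2) \<le> (\<Sum>y\<in>U. (w 1 y)\<^sup>2) / (t - \<theta>)\<^sup>2"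
    by (intro sum_sq_le_of_coercive) auto
  have "(w N y)\<^sup>2 \<le> (t^N)\<^sup>2 * (h y)\<^sup>2" for y
  proof -
    have "w N y / t^N \<le> h y"
      unfolding h_def using \<open>1 \<le> N\<close> w_nonneg \<open>t > 0\<close> by (intro member_le_sum) auto
    then have "w N y \<le> t^N * h y"
      using \<open>t > 0\<close> by (simp add: field_simps)
    then show ?thesis
      using w_nonneg by (simp add: power_mono power_mult_distrib[symmetric])
  qed
  then have "(\<Sum>y\<in>U. (w N y)\<^sup>2) \<le> (t^N)\<^sup>2 * (\<Sum>y\<in>U. (h y)\<^sup>2)"
    unfolding sum_distrib_left by (rule sum_mono)
  also have "\<dots> \<le> (t^N)\<^sup>2 * ((\<Sum>y\<in>U. (w 1 y)\<^sup>2) / (t - \<theta>)\<^sup>2)"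
    using h_bound by (rule mult_left_mono) simp
  finally show ?thesis
    by (simp add: power_divide)
qed

section \<open>Path sums as sums of endpoint weights\<close>

definition step_paths :: "(int ^ 'd) set \<Rightarrow> nat \<Rightarrow> (nat \<Rightarrow> int ^ 'd) set" where
  "step_paths A n = {xs \<in> paths n. \<forall>k\<in>{1..n}. xs k - xs (k - 1) \<in> A}"

definition path_prod :: "(int ^ 'd \<Rightarrow> real) \<Rightarrow> (int ^ 'd \<Rightarrow> real) \<Rightarrow> nat \<Rightarrow> (nat \<Rightarrow> int ^ 'd) \<Rightarrow> real"
  where "path_prod \<phi> Q n xs = (\<Prod>k\<in>{1..n}. \<phi> (xs k - xs (k - 1)) * Q (xs k))"

definition path_snoc :: "nat \<Rightarrow> (nat \<Rightarrow> int ^ 'd) \<Rightarrow> int ^ 'd \<Rightarrow> nat \<Rightarrow> int ^ 'd" where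
  "path_snoc n xs a = xs(Suc n := xs n + a)"

lemma path_snoc_last [simp]: "path_snoc n xs a (Suc n) = xs n + a"
  by (simp add: path_snoc_def)

lemma step_paths_0: "step_paths A 0 = {\<lambda>_. 0}"
  unfolding step_paths_def paths_def by (auto intro!: ext) (metis gr0I)

lemma step_paths_Suc: "step_paths A (Suc n) = (\<lambda>(xs, a). path_snoc n xs a) ` (step_paths A n \<times> A)"
proof
  show "(\<lambda>(xs, a). path_snoc n xs a) ` (step_paths A n \<times> A) \<subseteq> step_paths A (Suc n)"
    by (auto simp: step_paths_def paths_def path_snoc_def le_Suc_eq)
next
  show "step_paths A (Suc n) \<subseteq> (\<lambda>(xs, a). path_snoc n xs a) ` (step_paths A n \<times> A)"
  proof
    fix ys assume ys: "ys \<in> step_paths A (Suc n)"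
    have "ys = path_snoc n (ys(Suc n := 0)) (ys (Suc n) - ys n)"
      unfolding path_snoc_def by auto
    moreover have "ys (Suc n) - ys n \<in> A"
      using ys unfolding step_paths_def by force
    moreover have "ys(Suc n := 0) \<in> step_paths A n"
      using ys unfolding step_paths_def paths_def by auto
    ultimately show "ys \<in> (\<lambda>(xs, a). path_snoc n xs a) ` (step_paths A n \<times> A)"
      by (auto intro!: image_eqI[where x = "(ys(Suc n := 0), ys (Suc n) - ys n)"])
  qed
qed

lemma inj_on_path_snoc: "inj_on (\<lambda>(xs, a). path_snoc n xs a) (step_paths A n \<times> A)"
proof (rule inj_onI, clarify)
  fix xs a ys b
  assume "xs \<in> step_paths A n" "ys \<in> step_paths A n" and eq: "path_snoc n xs a = path_snoc n ys b"
  then have "xs (Suc n) = ys (Suc n)"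
    unfolding step_paths_def paths_def by simp
  with eq have "xs = ys"
    unfolding path_snoc_def by (metis fun_upd_triv fun_upd_upd)
  with eq show "xs = ys \<and> a = b"
    unfolding path_snoc_def by (metis add_left_cancel fun_upd_same)
qed

lemma finite_step_paths: "finite A \<Longrightarrow> finite (step_paths A n)"
  by (induction n) (auto simp: step_paths_0 step_paths_Suc)

lemma path_prod_snoc:
  "path_prod \<phi> Q (Suc n) (path_snoc n xs a) = path_prod \<phi> Q n xs * (\<phi> a * Q (xs n + a))"
proof -
  have "(\<Prod>k\<in>{1..n}. \<phi> (path_snoc n xs a k - path_snoc n xs a (k - 1)) * Q (path_snoc n xs a k))
      = path_prod \<phi> Q n xs"
    unfolding path_prod_def path_snoc_def by (rule prod.cong) auto
  then show ?thesis
    unfolding path_prod_def by (simp add: prod.nat_ivl_Suc' path_snoc_def)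
qed

primrec path_weight ::
  "(int ^ 'd \<Rightarrow> real) \<Rightarrow> (int ^ 'd \<Rightarrow> real) \<Rightarrow> (int ^ 'd) set \<Rightarrow> nat \<Rightarrow> int ^ 'd \<Rightarrow> real" where
  "path_weight \<phi> Q A 0 y = (if y = 0 then 1 else 0)"
| "path_weight \<phi> Q A (Suc n) y = (\<Sum>a\<in>A. path_weight \<phi> Q A n (y - a) * \<phi> a) * Q y"

text \<open>Endpoints of paths with \<open>n\<close> steps in \<open>A\<close> only depend on how often each step occurs;
  this gives polynomially many endpoints.\<close>
definition nat_combinations :: "(int ^ 'd) set \<Rightarrow> nat \<Rightarrow> (int ^ 'd) set" where
  "nat_combinations A n = (\<lambda>c. \<Sum>a\<in>A. of_nat (c a) *s a) ` (A \<rightarrow>\<^sub>E {0..n})"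

lemma zero_mem_nat_combinations: "0 \<in> nat_combinations A n"
proof -
  have "0 = (\<Sum>a\<in>A. of_nat (restrict (\<lambda>_. 0::nat) A a) *s a)"
    by (intro sum.neutral[symmetric]) auto
  moreover have "restrict (\<lambda>_. 0::nat) A \<in> A \<rightarrow>\<^sub>E {0..n}"
    by auto
  ultimately show ?thesis
    unfolding nat_combinations_def by (rule image_eqI)
qed

lemma add_mem_nat_combinations:
  assumes "finite A" and "x \<in> nat_combinations A n" and "a \<in> A"
  shows "x + a \<in> nat_combinations A (Suc n)"
proof -
  obtain c where c: "c \<in> A \<rightarrow>\<^sub>E {0..n}" and x: "x = (\<Sum>b\<in>A. of_nat (c b) *s b)"
    using assms(2) unfolding nat_combinations_def by auto
  define c' where "c' = c(a := Suc (c a))"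
  have c'_mem: "c' \<in> A \<rightarrow>\<^sub>E {0..Suc n}"
    using c assms(3) unfolding c'_def PiE_iff extensional_def by auto
  have c'_sum: "x + a = (\<Sum>b\<in>A. of_nat (c' b) *s b)"
  proof -
    have "(\<Sum>b\<in>A - {a}. of_nat (c' b) *s b) = (\<Sum>b\<in>A - {a}. of_nat (c b) *s b)"
      unfolding c'_def by (rule sum.cong) auto
    then have "(\<Sum>b\<in>A. of_nat (c' b) *s b) = of_nat (c' a) *s a + (\<Sum>b\<in>A - {a}. of_nat (c b) *s b)"
      using assms(1,3) by (simp add: sum.remove)
    also have "\<dots> = a + (of_nat (c a) *s a + (\<Sum>b\<in>A - {a}. of_nat (c b) *s b))"
      unfolding c'_def by (simp add: vector_sadd_rdistrib add_ac)
    also have "\<dots> = x + a"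
      unfolding x using assms(1,3) by (simp add: sum.remove add.commute)
    finally show ?thesis by simp
  qed
  show ?thesis
    unfolding nat_combinations_def
    by (rule image_eqI[where f = "\<lambda>c. \<Sum>a\<in>A. of_nat (c a) *s a", OF c'_sum c'_mem])
qed

lemma finite_nat_combinations: "finite A \<Longrightarrow> finite (nat_combinations A n)"
  unfolding nat_combinations_def by (intro finite_imageI finite_PiE) auto

lemma card_nat_combinations_le: "finite A \<Longrightarrow> card (nat_combinations A n) \<le> Suc n ^ card A"
proof -
  assume "finite A"
  then have "card (nat_combinations A n) \<le> card (A \<rightarrow>\<^sub>E {0..n})"
    unfolding nat_combinations_def by (intro card_image_le finite_PiE) auto
  also have "\<dots> = Suc n ^ card A"
    using \<open>finite A\<close> by (simp add: card_PiE)
  finally show ?thesis .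
qed

lemma path_weight_eq_0:
  assumes "finite A" and "y \<notin> nat_combinations A n"
  shows "path_weight \<phi> Q A n y = 0"
  using assms(2)
proof (induction n arbitrary: y)
  case 0
  then show ?case
    using zero_mem_nat_combinations[of A 0] by auto
next
  case (Suc n)
  have "y - a \<notin> nat_combinations A n" if "a \<in> A" for a
    using add_mem_nat_combinations[OF \<open>finite A\<close> _ that, of "y - a" n] Suc.prems by auto
  then show ?case
    using Suc.IH by simp
qed

lemma sum_path_weight_translate:
  assumes "finite A" and "a \<in> A"
  shows "(\<Sum>x\<in>nat_combinations A n. path_weight \<phi> Q A n x * g (x + a))
       = (\<Sum>y\<in>nat_combinations A (Suc n). path_weight \<phi> Q A n (y - a) * g y)"
proof -
  have "y - a \<notin> nat_combinations A n" if "y \<notin> nat_combinations A (Suc n)" for y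
    using add_mem_nat_combinations[OF assms(1) _ assms(2), of "y - a" n] that by auto
  then show ?thesis
    using finite_nat_combinations[OF assms(1)] path_weight_eq_0[OF assms(1)]
    by (subst sum_translate_of_support[where a = a]) (auto simp: add.commute)
qed

lemma sum_path_prod_eq_sum_path_weight:
  assumes "finite A"
  shows "(\<Sum>xs\<in>step_paths A n. path_prod \<phi> Q n xs * g (xs n))
       = (\<Sum>y\<in>nat_combinations A n. path_weight \<phi> Q A n y * g y)"
proof (induction n arbitrary: g)
  case 0
  have "(\<Sum>y\<in>nat_combinations A 0. path_weight \<phi> Q A 0 y * g y)
      = (\<Sum>y\<in>nat_combinations A 0. if y = 0 then g y else 0)"
    by (rule sum.cong) auto
  also have "\<dots> = g 0"
    using zero_mem_nat_combinations[of A 0] finite_nat_combinations[OF assms, of 0] by simp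
  finally have "(\<Sum>y\<in>nat_combinations A 0. path_weight \<phi> Q A 0 y * g y) = g 0" .
  then show ?case
    by (simp add: step_paths_0 path_prod_def)
next
  case (Suc n)
  let ?R = "nat_combinations A"
  have "(\<Sum>ys\<in>step_paths A (Suc n). path_prod \<phi> Q (Suc n) ys * g (ys (Suc n)))
      = (\<Sum>(xs, a)\<in>step_paths A n \<times> A.
           path_prod \<phi> Q (Suc n) (path_snoc n xs a) * g (path_snoc n xs a (Suc n)))"
    unfolding step_paths_Suc by (rule sum.reindex_cong[OF inj_on_path_snoc]) auto
  also have "\<dots> = (\<Sum>xs\<in>step_paths A n. \<Sum>a\<in>A. path_prod \<phi> Q n xs * (\<phi> a * Q (xs n + a) * g (xs n + a)))"
    by (simp add: sum.cartesian_product[symmetric] path_prod_snoc path_snoc_last mult.assoc)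
  also have "\<dots> = (\<Sum>x\<in>?R n. path_weight \<phi> Q A n x * (\<Sum>a\<in>A. \<phi> a * Q (x + a) * g (x + a)))"
    using Suc.IH[of "\<lambda>x. \<Sum>a\<in>A. \<phi> a * Q (x + a) * g (x + a)"] by (simp add: sum_distrib_left)
  also have "\<dots> = (\<Sum>a\<in>A. \<Sum>x\<in>?R n. path_weight \<phi> Q A n x * (\<phi> a * Q (x + a) * g (x + a)))"
    unfolding sum_distrib_left by (rule sum.swap)
  also have "\<dots> = (\<Sum>a\<in>A. \<Sum>y\<in>?R (Suc n). path_weight \<phi> Q A n (y - a) * (\<phi> a * Q y * g y))"
  proof (rule sum.cong[OF refl])
    fix a assume "a \<in> A"
    show "(\<Sum>x\<in>?R n. path_weight \<phi> Q A n x * (\<phi> a * Q (x + a) * g (x + a)))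
        = (\<Sum>y\<in>?R (Suc n). path_weight \<phi> Q A n (y - a) * (\<phi> a * Q y * g y))"
      by (rule sum_path_weight_translate[OF assms \<open>a \<in> A\<close>, where g = "\<lambda>y. \<phi> a * Q y * g y"])
  qed
  also have "\<dots> = (\<Sum>y\<in>?R (Suc n). \<Sum>a\<in>A. path_weight \<phi> Q A n (y - a) * (\<phi> a * Q y * g y))"
    by (rule sum.swap)
  also have "\<dots> = (\<Sum>y\<in>?R (Suc n). path_weight \<phi> Q A (Suc n) y * g y)"
    unfolding path_weight.simps sum_distrib_right by (simp only: mult.assoc)
  finally show ?case .
qed

lemma path_sum_eq_sum_path_weight:
  assumes "finite A"
  shows "path_sum p q A \<pi> Q \<nu> n = (\<Sum>y\<in>nat_combinations A n. path_weight (phi p q A \<pi> \<nu>) Q A n y)"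
proof -
  define \<phi> where "\<phi> = phi p q A \<pi> \<nu>"
  have "path_sum p q A \<pi> Q \<nu> n = infsum (path_prod \<phi> Q n) (paths n)"
    unfolding path_sum_def path_prod_def \<phi>_def ..
  also have "\<dots> = infsum (path_prod \<phi> Q n) (step_paths A n)"
  proof (rule infsum_cong_neutral)
    fix xs assume "xs \<in> paths n - step_paths A n"
    then obtain k where "k \<in> {1..n}" and "xs k - xs (k - 1) \<notin> A"
      unfolding step_paths_def by auto
    then show "path_prod \<phi> Q n xs = 0"
      unfolding path_prod_def \<phi>_def phi_def by (intro prod_zero) auto
  qed (auto simp: step_paths_def)
  also have "\<dots> = (\<Sum>xs\<in>step_paths A n. path_prod \<phi> Q n xs * 1)"
    using finite_step_paths[OF assms] by simp
  also have "\<dots> = (\<Sum>y\<in>nat_combinations A n. path_weight \<phi> Q A n y)"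
    using sum_path_prod_eq_sum_path_weight[OF assms, where g = "\<lambda>_. 1"] by simp
  finally show ?thesis
    unfolding \<phi>_def .
qed

section \<open>Exponential bound on the path sums\<close>

lemma prob_measures_on_nonneg: "\<nu> \<in> prob_measures_on A \<Longrightarrow> 0 \<le> \<nu> x"
  unfolding prob_measures_on_def by (cases "x \<in> A") auto

lemma prob_measures_on_zero: "\<nu> \<in> prob_measures_on A \<Longrightarrow> x \<notin> A \<Longrightarrow> \<nu> x = 0"
  unfolding prob_measures_on_def by auto

lemma prob_measures_on_le_one:
  assumes "\<nu> \<in> prob_measures_on A" and "finite A"
  shows "\<nu> x \<le> 1"
proof (cases "x \<in> A")
  case True
  then show ?thesis
    using assms member_le_sum[of x A \<nu>] unfolding prob_measures_on_def by auto
qed (use assms in \<open>simp add: prob_measures_on_def\<close>)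

lemma phi_nonneg: "0 \<le> phi p q A \<pi> \<nu> x"
  unfolding phi_def by simp

lemma phi_le_one:
  assumes "p > 0" and "q > 0" and "finite A"
    and "\<pi> \<in> prob_measures_on A" and "\<nu> \<in> prob_measures_on A"
  shows "phi p q A \<pi> \<nu> x \<le> 1"
proof (cases "x \<in> A")
  case True
  then have "\<nu> x powr (1/q) \<le> 1" and "\<pi> x powr (1/p) \<le> 1"
    using assms prob_measures_on_le_one[of _ A x] unfolding prob_measures_on_def
    by (auto intro!: powr_le1)
  then show ?thesis
    unfolding phi_def using True by (simp add: mult_le_one)
qed (simp add: phi_def)

lemma mono_nat_combinations: "n \<le> m \<Longrightarrow> nat_combinations A n \<subseteq> nat_combinations A m"
  unfolding nat_combinations_def by (intro image_mono PiE_mono) auto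

lemma path_weight_nonneg:
  assumes "\<And>x. 0 \<le> \<phi> x" and "\<And>x. 0 \<le> Q x"
  shows "0 \<le> path_weight \<phi> Q A n y"
  by (induction n arbitrary: y) (auto intro!: mult_nonneg_nonneg sum_nonneg simp: assms)

definition sym_path_weight ::
  "(int ^ 'd \<Rightarrow> real) \<Rightarrow> (int ^ 'd \<Rightarrow> real) \<Rightarrow> (int ^ 'd) set \<Rightarrow> nat \<Rightarrow> int ^ 'd \<Rightarrow> real" where
  "sym_path_weight \<phi> Q A n y = path_weight \<phi> Q A n y / sqrt (Q y)"

text \<open>For \<open>n \<ge> 1\<close> the weight carries a factor \<open>Q y\<close>, so nothing is lost where \<open>Q y = 0\<close> and the
  division returns \<open>0\<close>; for \<open>n = 0\<close> the identity fails.\<close>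
lemma path_weight_eq_sym_path_weight:
  assumes "\<And>x. 0 \<le> Q x" and "1 \<le> n"
  shows "path_weight \<phi> Q A n y = sym_path_weight \<phi> Q A n y * sqrt (Q y)"
proof -
  obtain m where "n = Suc m"
    using assms(2) by (cases n) auto
  then show ?thesis
    using assms(1)[of y] unfolding sym_path_weight_def by (cases "Q y = 0") auto
qed

lemma sym_path_weight_Suc:
  assumes "\<And>x. 0 \<le> Q x" and "1 \<le> n"
  shows "sym_path_weight \<phi> Q A (Suc n) y = sym_transfer Q A \<phi> (sym_path_weight \<phi> Q A n) y"
proof -
  have "Q y / sqrt (Q y) = sqrt (Q y)"
    using assms(1) by (simp add: real_div_sqrt)
  then have "sym_path_weight \<phi> Q A (Suc n) y = (\<Sum>a\<in>A. path_weight \<phi> Q A n (y - a) * \<phi> a) * sqrt (Q y)"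
    unfolding sym_path_weight_def by (simp add: times_divide_eq_right[symmetric])
  then show ?thesis
    unfolding sym_transfer_def path_weight_eq_sym_path_weight[OF assms]
    by (simp add: algebra_simps)
qed

lemma sym_path_weight_one:
  assumes "finite A" and "\<And>x. 0 \<le> Q x"
  shows "sym_path_weight \<phi> Q A 1 y = (if y \<in> A then \<phi> y else 0) * sqrt (Q y)"
proof -
  have "(\<Sum>a\<in>A. path_weight \<phi> Q A 0 (y - a) * \<phi> a) = (\<Sum>a\<in>A. if a = y then \<phi> a else 0)"
    by (rule sum.cong) auto
  also have "\<dots> = (if y \<in> A then \<phi> y else 0)"
    using assms(1) by simp
  moreover have "Q y / sqrt (Q y) = sqrt (Q y)"
    using assms(2) by (simp add: real_div_sqrt)
  ultimately show ?thesis
    unfolding sym_path_weight_def by (simp add: times_divide_eq_right[symmetric])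
qed

lemma sym_path_weight_nonneg:
  assumes "\<And>x. 0 \<le> \<phi> x" and "\<And>x. 0 \<le> Q x"
  shows "0 \<le> sym_path_weight \<phi> Q A n y"
  unfolding sym_path_weight_def using path_weight_nonneg[of \<phi> Q, OF assms] assms(2)[of y]
  by (intro divide_nonneg_nonneg) auto

lemma sym_transfer_resolvent:
  assumes "\<And>x. 0 \<le> Q x"
  shows "sym_transfer Q A \<phi> (\<lambda>y. \<Sum>k=1..N. sym_path_weight \<phi> Q A k y / t^k) y
       = (\<Sum>k=1..N. sym_path_weight \<phi> Q A (Suc k) y / t^k)"
proof -
  have "sym_transfer Q A \<phi> (\<lambda>y. \<Sum>k=1..N. (1 / t^k) * sym_path_weight \<phi> Q A k y) y
      = (\<Sum>k=1..N. (1 / t^k) * sym_transfer Q A \<phi> (sym_path_weight \<phi> Q A k) y)"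
    by (rule sym_transfer_lincomb)
  also have "\<dots> = (\<Sum>k=1..N. sym_path_weight \<phi> Q A (Suc k) y / t^k)"
    using sym_path_weight_Suc[where Q = Q, OF assms] by (intro sum.cong) auto
  finally show ?thesis
    by simp
qed

lemma sym_path_weight_eq_0:
  "finite A \<Longrightarrow> y \<notin> nat_combinations A n \<Longrightarrow> sym_path_weight \<phi> Q A n y = 0"
  unfolding sym_path_weight_def by (simp add: path_weight_eq_0)

lemma sum_sq_sym_path_weight_one_le:
  fixes M :: real
  assumes "finite A" and "finite U"
    and \<phi>: "\<And>x. 0 \<le> \<phi> x" "\<And>x. \<phi> x \<le> 1" and Q: "\<And>x. 0 \<le> Q x" "\<And>x. Q x \<le> M"
  shows "(\<Sum>y\<in>U. (sym_path_weight \<phi> Q A 1 y)\<^sup>2) \<le> card A * M"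
proof -
  have "(sym_path_weight \<phi> Q A 1 y)\<^sup>2 \<le> (if y \<in> A then M else 0)" for y
  proof (cases "y \<in> A")
    case True
    have "(sym_path_weight \<phi> Q A 1 y)\<^sup>2 = (\<phi> y)\<^sup>2 * Q y"
      unfolding sym_path_weight_one[where Q = Q, OF \<open>finite A\<close> Q(1)] using True Q(1)[of y]
      by (simp add: power_mult_distrib)
    also have "\<dots> \<le> 1 * M"
      using \<phi>[of y] Q[of y] by (intro mult_mono power_le_one) auto
    finally show ?thesis
      using True by simp
  qed (use sym_path_weight_one[where Q = Q, OF \<open>finite A\<close> Q(1), of \<phi> y] in simp)
  then have "(\<Sum>y\<in>U. (sym_path_weight \<phi> Q A 1 y)\<^sup>2) \<le> (\<Sum>y\<in>U. if y \<in> A then M else 0)"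
    by (rule sum_mono)
  also have "\<dots> = card (U \<inter> A) * M"
    using \<open>finite U\<close> by (simp add: sum.inter_restrict[symmetric])
  also have "\<dots> \<le> card A * M"
    using Q[of 0] \<open>finite A\<close> by (intro mult_right_mono) (auto intro: card_mono)
  finally show ?thesis .
qed

lemma sum_sq_sym_path_weight_le:
  fixes \<pi> \<nu> Q :: "int ^ 'd \<Rightarrow> real" and M :: real
  assumes pq: "p > 1" "q > 1" "1/p + 1/q = 1" and "finite A"
    and \<pi>: "\<pi> \<in> prob_measures_on A" and \<nu>: "\<nu> \<in> prob_measures_on A"
    and Q: "\<And>x. 0 \<le> Q x" "\<And>x. Q x \<le> M"
    and t: "rho_tilde p \<pi> Q powr (1/p) < t" and "1 \<le> N"
  shows "(\<Sum>y\<in>nat_combinations A (Suc N). (sym_path_weight (phi p q A \<pi> \<nu>) Q A N y)\<^sup>2)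
           \<le> (t^N / (t - rho_tilde p \<pi> Q powr (1/p)))\<^sup>2 * (card A * M)"
proof -
  define \<theta> where "\<theta> = rho_tilde p \<pi> Q powr (1/p)"
  define \<phi> where "\<phi> = phi p q A \<pi> \<nu>"
  define w where "w = sym_path_weight \<phi> Q A"
  define U where "U = nat_combinations A (Suc N)"
  define h where "h = (\<lambda>y. \<Sum>k=1..N. w k y / t^k)"
  have "finite U"
    unfolding U_def using finite_nat_combinations[OF \<open>finite A\<close>] .
  note \<pi>_nonneg = prob_measures_on_nonneg[OF \<pi>] and \<pi>_zero = prob_measures_on_zero[OF \<pi>]
  have "0 \<le> \<theta>" "\<theta> < t"
    using t unfolding \<theta>_def by simp_all
  then have "t > 0" by linarith
  have w_nonneg: "0 \<le> w k y" for k y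
    unfolding w_def \<phi>_def using phi_nonneg Q(1) by (rule sym_path_weight_nonneg)
  have w_zero: "w k y = 0" if "k \<le> Suc N" and "y \<notin> U" for k y
    using that mono_nat_combinations[OF that(1), of A] sym_path_weight_eq_0[OF \<open>finite A\<close>]
    unfolding w_def U_def by blast
  have h_nonneg: "0 \<le> h y" for y
    unfolding h_def using w_nonneg \<open>t > 0\<close> by (simp add: sum_nonneg)
  have h_zero: "h y = 0" if "y \<notin> U" for y
    unfolding h_def using w_zero[OF _ that] by simp
  have transfer_h: "sym_transfer Q A \<phi> h y = (\<Sum>k=1..N. w (Suc k) y / t^k)" for y
    unfolding h_def w_def using sym_transfer_resolvent[where Q = Q, OF Q(1)] by simp
  have "(\<Sum>y\<in>U. h y * sym_transfer Q A \<phi> h y) \<le> \<theta> * (\<Sum>y\<in>U. (h y)\<^sup>2)"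
    unfolding \<theta>_def \<phi>_def
    by (rule quadratic_form_sym_transfer_le[OF pq \<open>finite A\<close> \<pi>_nonneg \<pi>_zero \<nu> Q \<open>finite U\<close>])
       (use h_zero h_nonneg in auto)
  then have "(\<Sum>y\<in>U. (w N y)\<^sup>2) \<le> (t^N / (t - \<theta>))\<^sup>2 * (\<Sum>y\<in>U. (w 1 y)\<^sup>2)"
    unfolding transfer_h unfolding h_def
    by (rule orbit_growth_bound[where w = w, OF \<open>finite U\<close> \<open>0 \<le> \<theta>\<close> \<open>\<theta> < t\<close> \<open>1 \<le> N\<close> w_nonneg])
  also have "(\<Sum>y\<in>U. (w 1 y)\<^sup>2) \<le> card A * M"
    unfolding w_def \<phi>_def using pq phi_nonneg
    by (intro sum_sq_sym_path_weight_one_le[OF \<open>finite A\<close> \<open>finite U\<close>]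
        phi_le_one[OF _ _ \<open>finite A\<close> \<pi> \<nu>] Q) auto
  finally show ?thesis
    unfolding U_def w_def \<phi>_def \<theta>_def by (simp add: mult_left_mono)
qed

lemma path_sum_sq_le:
  fixes \<pi> \<nu> Q :: "int ^ 'd \<Rightarrow> real" and M :: real
  assumes pq: "p > 1" "q > 1" "1/p + 1/q = 1" and "finite A"
    and \<pi>: "\<pi> \<in> prob_measures_on A" and \<nu>: "\<nu> \<in> prob_measures_on A"
    and Q: "\<And>x. 0 \<le> Q x" "\<And>x. Q x \<le> M"
    and t: "rho_tilde p \<pi> Q powr (1/p) < t" and "1 \<le> N"
  shows "(path_sum p q A \<pi> Q \<nu> N)\<^sup>2
           \<le> (t^N / (t - rho_tilde p \<pi> Q powr (1/p)) * M)\<^sup>2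
              * real (card A * card (nat_combinations A N))"
proof -
  define \<theta> where "\<theta> = rho_tilde p \<pi> Q powr (1/p)"
  define w where "w = sym_path_weight (phi p q A \<pi> \<nu>) Q A N"
  define R where "R = nat_combinations A N"
  have "M \<ge> 0"
    using Q[of 0] by simp
  have "path_sum p q A \<pi> Q \<nu> N = (\<Sum>y\<in>R. w y * sqrt (Q y))"
    unfolding path_sum_eq_sum_path_weight[OF \<open>finite A\<close>] R_def w_def
    using path_weight_eq_sym_path_weight[where Q = Q, OF Q(1) \<open>1 \<le> N\<close>] by simp
  also have "\<dots>\<^sup>2 \<le> (\<Sum>y\<in>R. (w y)\<^sup>2) * (\<Sum>y\<in>R. (sqrt (Q y))\<^sup>2)"
    by (rule Cauchy_Schwarz_ineq_sum)
  also have "\<dots> \<le> ((t^N / (t - \<theta>))\<^sup>2 * (card A * M)) * (card R * M)"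
  proof (rule mult_mono)
    have "(\<Sum>y\<in>R. (w y)\<^sup>2) \<le> (\<Sum>y\<in>nat_combinations A (Suc N). (w y)\<^sup>2)"
      using mono_nat_combinations[of N "Suc N" A] finite_nat_combinations[OF \<open>finite A\<close>]
      unfolding R_def by (intro sum_mono2) auto
    also have "\<dots> \<le> (t^N / (t - \<theta>))\<^sup>2 * (card A * M)"
      unfolding w_def \<theta>_def by (rule sum_sq_sym_path_weight_le[OF pq \<open>finite A\<close> \<pi> \<nu> Q t \<open>1 \<le> N\<close>])
    finally show "(\<Sum>y\<in>R. (w y)\<^sup>2) \<le> (t^N / (t - \<theta>))\<^sup>2 * (card A * M)" .
    show "(\<Sum>y\<in>R. (sqrt (Q y))\<^sup>2) \<le> card R * M"
      using Q sum_bounded_above[of R Q M] by simp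
  qed (use \<open>M \<ge> 0\<close> in \<open>auto intro: sum_nonneg\<close>)
  also have "\<dots> = (t^N / (t - \<theta>) * M)\<^sup>2 * real (card A * card R)"
    by (simp add: power2_eq_square algebra_simps)
  finally show ?thesis
    unfolding \<theta>_def R_def .
qed

lemma path_sum_le:
  fixes \<pi> \<nu> Q :: "int ^ 'd \<Rightarrow> real" and M :: real
  assumes pq: "p > 1" "q > 1" "1/p + 1/q = 1" and "finite A"
    and \<pi>: "\<pi> \<in> prob_measures_on A" and \<nu>: "\<nu> \<in> prob_measures_on A"
    and Q: "\<And>x. 0 \<le> Q x" "\<And>x. Q x \<le> M"
    and t: "rho_tilde p \<pi> Q powr (1/p) < t" and "1 \<le> N"
  shows "path_sum p q A \<pi> Q \<nu> N
           \<le> M * card A / (t - rho_tilde p \<pi> Q powr (1/p)) * real (Suc N) ^ card A * t ^ N"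
proof -
  define \<theta> where "\<theta> = rho_tilde p \<pi> Q powr (1/p)"
  define c where "c = card A * Suc N ^ card A"
  have "M \<ge> 0" "0 \<le> \<theta>" "\<theta> < t"
    using Q[of 0] t unfolding \<theta>_def by simp_all
  have "card A * card (nat_combinations A N) \<le> c"
    unfolding c_def by (rule mult_le_mono2[OF card_nat_combinations_le[OF \<open>finite A\<close>]])
  also have "c \<le> c\<^sup>2"
    unfolding power2_eq_square by (rule le_square)
  finally have "real (card A * card (nat_combinations A N)) \<le> (real c)\<^sup>2"
    by (simp only: of_nat_le_iff flip: of_nat_power)
  then have "(path_sum p q A \<pi> Q \<nu> N)\<^sup>2 \<le> (t^N / (t - \<theta>) * M)\<^sup>2 * (real c)\<^sup>2"
    by (rule order_trans[OF path_sum_sq_le[OF pq \<open>finite A\<close> \<pi> \<nu> Q t \<open>1 \<le> N\<close>, folded \<theta>_def]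
          mult_left_mono]) simp
  also have "\<dots> = (t^N / (t - \<theta>) * M * c)\<^sup>2"
    by (simp only: power_mult_distrib)
  finally have "path_sum p q A \<pi> Q \<nu> N \<le> t^N / (t - \<theta>) * M * c"
    by (rule power2_le_imp_le) (use \<open>M \<ge> 0\<close> \<open>0 \<le> \<theta>\<close> \<open>\<theta> < t\<close> in simp)
  also have "\<dots> = M * card A / (t - \<theta>) * real (Suc N) ^ card A * t ^ N"
    unfolding c_def by (simp add: field_simps)
  finally show ?thesis
    unfolding \<theta>_def .
qed

lemma limsup_eln_le_ln_of_growth_bound:
  fixes S :: "nat \<Rightarrow> real"
  assumes "t > 0" and bound: "\<And>n. 1 \<le> n \<Longrightarrow> S n \<le> K * real (Suc n) ^ k * t ^ n"
  shows "limsup (\<lambda>n. ereal (1 / real n) * eln (S n)) \<le> ereal (ln t)"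
proof -
  define K' where "K' = max K 1"
  define Y where "Y n = ln K' / real n + k * ln (real (Suc n)) / real n + ln t" for n
  have "K' > 0"
    unfolding K'_def by simp
  have "eventually (\<lambda>n. ereal (1 / real n) * eln (S n) \<le> ereal (Y n)) sequentially"
    using eventually_ge_at_top[of 1]
  proof eventually_elim
    case (elim n)
    show ?case
    proof (cases "S n > 0")
      case True
      have "K * real (Suc n) ^ k * t ^ n \<le> K' * real (Suc n) ^ k * t ^ n"
        unfolding K'_def using \<open>t > 0\<close> by (intro mult_right_mono) auto
      with bound[OF elim] have "S n \<le> K' * real (Suc n) ^ k * t ^ n"
        by linarith
      then have "ln (S n) \<le> ln (K' * real (Suc n) ^ k * t ^ n)"
        using True by (subst ln_le_cancel_iff) auto
      also have "\<dots> = ln K' + k * ln (real (Suc n)) + n * ln t"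
        using \<open>K' > 0\<close> \<open>t > 0\<close> by (simp add: ln_mult ln_realpow del: of_nat_Suc)
      finally have "ln (S n) \<le> ln K' + k * ln (real (Suc n)) + n * ln t" .
      moreover have "Y n = (ln K' + k * ln (real (Suc n)) + n * ln t) / real n"
        unfolding Y_def using elim by (simp add: field_simps del: of_nat_Suc)
      ultimately have "ln (S n) / real n \<le> Y n"
        by (simp add: divide_right_mono)
      then show ?thesis
        using True unfolding eln_def by simp
    qed (use elim in \<open>simp add: eln_def\<close>)
  qed
  then have "limsup (\<lambda>n. ereal (1 / real n) * eln (S n)) \<le> limsup (\<lambda>n. ereal (Y n))"
    by (rule Limsup_mono)
  also have "\<dots> = ereal (ln t)"
  proof (intro lim_imp_Limsup)
    have "Y \<longlonglongrightarrow> ln t"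
      unfolding Y_def by real_asymp
    then show "(\<lambda>n. ereal (Y n)) \<longlonglongrightarrow> ereal (ln t)"
      by (simp add: tendsto_ereal)
  qed simp
  finally show ?thesis .
qed

lemma le_eln_of_le_ln_greater:
  fixes L :: ereal
  assumes "0 \<le> \<theta>" and le: "\<And>t. \<theta> < t \<Longrightarrow> L \<le> ereal (ln t)"
  shows "L \<le> eln \<theta>"
proof (cases "\<theta> = 0")
  case True
  have "L \<le> ereal B" for B
    using le[of "exp B"] True by simp
  then show ?thesis
    using True ereal_bot by (force simp: eln_def)
next
  case False
  with assms(1) have "\<theta> > 0" by simp
  have "L \<le> ereal (ln \<theta>) + ereal e" if "e > 0" for e
    using le[of "\<theta> * exp e"] \<open>\<theta> > 0\<close> that by (simp add: ln_mult)
  then have "L \<le> ereal (ln \<theta>)"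
    by (rule ereal_le_epsilon2)
  then show ?thesis
    using \<open>\<theta> > 0\<close> by (simp add: eln_def)
qed

lemma eln_powr:
  assumes "0 \<le> x" and "0 < a"
  shows "eln (x powr a) = ereal a * eln x"
  using assms by (cases "x = 0") (auto simp: eln_def ln_powr)

lemma bounded_of_tendsto_zero_cofinite:
  fixes Q :: "'a \<Rightarrow> real"
  assumes "(Q \<longlongrightarrow> 0) cofinite"
  obtains M where "\<And>x. Q x \<le> M"
proof -
  have "finite {x. \<not> Q x < 1}"
    using order_tendstoD(2)[OF assms, of 1] by (simp add: eventually_cofinite)
  then have "Q x \<le> Max (insert 1 (Q ` {x. \<not> Q x < 1}))" for x
    by (cases "Q x < 1") (auto intro: Max_ge order.trans[OF less_imp_le])
  then show ?thesis
    using that by blast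
qed

theorem lemma4p2:
  fixes p q :: real and A :: "(int ^ 'd) set" and \<pi> Q :: "int ^ 'd \<Rightarrow> real"
  assumes "p > 1" and "q > 1" and "1/p + 1/q = 1"
    and "finite A" and "gen_subgroup A = UNIV"
    and "\<forall>x\<in>A. \<pi> x > 0" and "\<forall>x. x \<notin> A \<longrightarrow> \<pi> x = 0"
    and "sum \<pi> A = 1" and "\<forall>x. \<pi> (- x) = \<pi> x"
    and "\<forall>x. Q x \<ge> 0" and "(Q \<longlongrightarrow> 0) cofinite"
  shows "limsup (\<lambda>n. ereal (1 / real n) *
            eln (Sup {path_sum p q A \<pi> Q \<nu> n | \<nu>. \<nu> \<in> prob_measures_on A}))
         \<le> ereal (1/p) * eln (rho_tilde p \<pi> Q)"
proof -
  obtain M where Q: "\<And>x. 0 \<le> Q x" "\<And>x. Q x \<le> M"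
    using bounded_of_tendsto_zero_cofinite[OF assms(11)] assms(10) by blast
  have \<pi>: "\<pi> \<in> prob_measures_on A"
    using assms(6-8) unfolding prob_measures_on_def by (auto simp: less_imp_le)
  define \<theta> where "\<theta> = rho_tilde p \<pi> Q powr (1/p)"
  define S where "S n = Sup {path_sum p q A \<pi> Q \<nu> n | \<nu>. \<nu> \<in> prob_measures_on A}" for n
  have S_le: "S n \<le> M * card A / (t - \<theta>) * real (Suc n) ^ card A * t ^ n" if "\<theta> < t" "1 \<le> n" for t n
    unfolding S_def using path_sum_le[OF assms(1-4) \<pi> _ Q] that \<pi> unfolding \<theta>_def
    by (intro cSup_least) auto
  have "0 \<le> \<theta>"
    unfolding \<theta>_def by simp
  then have "limsup (\<lambda>n. ereal (1 / real n) * eln (S n)) \<le> eln \<theta>"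
  proof (rule le_eln_of_le_ln_greater)
    fix t assume "\<theta> < t"
    show "limsup (\<lambda>n. ereal (1 / real n) * eln (S n)) \<le> ereal (ln t)"
    proof (rule limsup_eln_le_ln_of_growth_bound[where K = "M * card A / (t - \<theta>)" and k = "card A"])
      show "t > 0"
        using \<open>0 \<le> \<theta>\<close> \<open>\<theta> < t\<close> by linarith
    qed (rule S_le[OF \<open>\<theta> < t\<close>])
  qed
  also have "eln \<theta> = ereal (1/p) * eln (rho_tilde p \<pi> Q)"
    unfolding \<theta>_def using assms(1) prob_measures_on_nonneg[OF \<pi>] prob_measures_on_zero[OF \<pi>]
    by (intro eln_powr rho_tilde_nonneg[where \<pi> = \<pi> and Q = Q, OF Q assms(4)]) auto
  finally show ?thesis
    unfolding S_def .
qed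

end
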